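(* Let $C>0$, $c_{1,i}=\frac{\beta_i}{2C}$, $r=\sqrt{u^2+v^2}$, and for $i=1,2$ let $\varphi_{0,i}(u,v,z)=r^{p_i}z^{q_i}$ and $\varphi_{1,i}(u,v,z)=\frac{r^{p_i}z^{q_i}}{(C^{-2}+1)^{\beta_i/2}}\left|\frac{r}{v}\right|^{\beta_i}+c_{1,i}r^{p_i}z^{q_i}\left|\frac{r}{v}\right|^{\beta_i}\int_{u/|v|}^{1/C}(t^2+1)^{\frac{\alpha_i-\beta_i-1}{2}}\,dt.$ Then for all $C=C(h)>0$ sufficiently large, $\left(\partial_u\varphi_{0,i}-\partial_u\varphi_{1,i}\right)\le0$ at every point $(u,v,z)$ with $Cu=|v|$, $v\neq 0$, $0<z\le1$, $i=1,2$.
   Context: Fix $h\in(0,1)$ and $\alpha_h=\frac13+\frac23h$. Constants $p_i,q_i,\alpha_i,\beta_i$ ($i=1,2$) satisfy $p_1>0$, $p_2>0$, $q_1=0$, $q_2>0$, $0<\alpha_hp_i-(1-h)q_i=\beta_i<\alpha_i<1$, $q_2>\frac13p_2+\frac12\alpha_2$, $p_2>p_1$, $p_2+\frac32\alpha_2>p_1+\frac32\alpha_1$. *)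

theory Defs
  imports "HOL-Analysis.Analysis"
begin

definition oint :: "real \<Rightarrow> real \<Rightarrow> (real \<Rightarrow> real) \<Rightarrow> real" where
  "oint a b f = (if a \<le> b then integral {a..b} f else - integral {b..a} f)"

definition phi0 :: "real \<Rightarrow> real \<Rightarrow> real \<Rightarrow> real \<Rightarrow> real \<Rightarrow> real" where
  "phi0 p q u v z = (sqrt (u\<^sup>2 + v\<^sup>2)) powr p * z powr q"

definition phi1 :: "real \<Rightarrow> real \<Rightarrow> real \<Rightarrow> real \<Rightarrow> real \<Rightarrow> real \<Rightarrow> real \<Rightarrow> real \<Rightarrow> real" where
  "phi1 C p q \<alpha> \<beta> u v z =
     (let r = sqrt (u\<^sup>2 + v\<^sup>2); c1 = \<beta> / (2 * C) in
       r powr p * z powr q / ((C powr (-2) + 1) powr (\<beta> / 2)) * \<bar>r / v\<bar> powr \<beta>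
       + c1 * r powr p * z powr q * \<bar>r / v\<bar> powr \<beta>
         * oint (u / \<bar>v\<bar>) (1 / C) (\<lambda>t. (t\<^sup>2 + 1) powr ((\<alpha> - \<beta> - 1) / 2)))"

end

theory Submission
  imports Defs
begin

(* With t = u/|v|, both phi0 and phi1 are z^q |v|^p times a profile in t alone (psi0 = phi0_profile,
   psi1 = phi1_profile), so on the line C u = |v|, i.e. t = 1/C, the u-derivative difference has
   the sign of psi0'(1/C) - psi1'(1/C). There the oriented integral vanishes, and with w = 1 + C^-2
     psi0'(1/C) - psi1'(1/C) = (beta/C) w^(p/2 - 1) (w^((alpha + 1)/2) / 2 - 1),
   which is <= 0 since 1 <= w <= 2 for C >= 1 and (alpha + 1)/2 <= 1. So C0 = 1 works, and of the
   hypotheses only beta >= 0 and alpha <= 1 are needed. *)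

lemma sqrt_powr: "0 \<le> x \<Longrightarrow> sqrt x powr e = x powr (e / 2)"
  by (simp add: powr_half_sqrt [symmetric] powr_powr)

lemma oint_eq_integral_diff:
  fixes f :: "real \<Rightarrow> real"
  assumes f: "continuous_on UNIV f" and "c \<le> x" "c \<le> b"
  shows "oint x b f = integral {c..b} f - integral {c..x} f"
proof -
  have int: "f integrable_on {s..t}" for s t
    by (rule integrable_continuous_interval [OF continuous_on_subset [OF f]]) simp
  show ?thesis
  proof (cases "x \<le> b")
    case True
    then have "integral {c..x} f + integral {x..b} f = integral {c..b} f"
      using assms int by (intro Henstock_Kurzweil_Integration.integral_combine) auto
    then show ?thesis using True by (simp add: oint_def)
  next
    case False
    then have "integral {c..b} f + integral {b..x} f = integral {c..x} f"
      using assms int by (intro Henstock_Kurzweil_Integration.integral_combine) auto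
    then show ?thesis using False by (simp add: oint_def)
  qed
qed

lemma has_real_derivative_oint_lower:
  fixes f :: "real \<Rightarrow> real"
  assumes f: "continuous_on UNIV f"
  shows "((\<lambda>x. oint x b f) has_real_derivative - f x) (at x)"
proof -
  define c where "c = min x b - 1"
  have "((\<lambda>y. integral {c..y} f) has_real_derivative f x) (at x within {c..x + 1})"
    by (intro integral_has_real_derivative) (auto simp: c_def intro: continuous_on_subset [OF f])
  moreover have "at x within {c..x + 1} = at x"
    by (intro at_within_interior) (simp add: c_def)
  ultimately have "((\<lambda>y. integral {c..b} f - integral {c..y} f) has_real_derivative - f x) (at x)"
    by (auto intro!: derivative_eq_intros)
  then show ?thesis
    by (rule has_field_derivative_transform_within_open [of _ _ _ "{c<..}"])
      (auto simp: c_def oint_eq_integral_diff [OF f, of c])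
qed

definition phi0_profile :: "real \<Rightarrow> real \<Rightarrow> real" where
  "phi0_profile P t = (t\<^sup>2 + 1) powr (P / 2)"

definition phi1_profile :: "real \<Rightarrow> real \<Rightarrow> real \<Rightarrow> real \<Rightarrow> real \<Rightarrow> real" where
  "phi1_profile C P A B t =
     (t\<^sup>2 + 1) powr ((P + B) / 2)
       * (1 / (C powr (-2) + 1) powr (B / 2)
          + B / (2 * C) * oint t (1 / C) (\<lambda>\<tau>. (\<tau>\<^sup>2 + 1) powr ((A - B - 1) / 2)))"

lemma sqrt_sum_squares_eq_scaled:
  fixes u v :: real
  assumes "v \<noteq> 0"
  shows "sqrt (u\<^sup>2 + v\<^sup>2) = \<bar>v\<bar> * sqrt ((u / \<bar>v\<bar>)\<^sup>2 + 1)"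
proof -
  have "u\<^sup>2 + v\<^sup>2 = \<bar>v\<bar>\<^sup>2 * ((u / \<bar>v\<bar>)\<^sup>2 + 1)"
    using assms by (simp add: field_simps)
  then show ?thesis by (simp add: real_sqrt_mult)
qed

lemma phi0_eq_profile:
  assumes "v \<noteq> 0"
  shows "phi0 P Q u v z = z powr Q * \<bar>v\<bar> powr P * phi0_profile P (u / \<bar>v\<bar>)"
  by (simp add: phi0_def phi0_profile_def sqrt_sum_squares_eq_scaled [OF assms] powr_mult
      sqrt_powr add_nonneg_nonneg)

lemma phi1_eq_profile:
  assumes "v \<noteq> 0"
  shows "phi1 C P Q A B u v z = z powr Q * \<bar>v\<bar> powr P * phi1_profile C P A B (u / \<bar>v\<bar>)"
proof -
  define s where "s = (u / \<bar>v\<bar>)\<^sup>2 + 1"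
  define I where "I = oint (u / \<bar>v\<bar>) (1 / C) (\<lambda>t. (t\<^sup>2 + 1) powr ((A - B - 1) / 2))"
  have s: "s > 0" by (simp add: s_def add_nonneg_pos)
  have r: "sqrt (u\<^sup>2 + v\<^sup>2) = \<bar>v\<bar> * sqrt s"
    unfolding s_def by (rule sqrt_sum_squares_eq_scaled [OF assms])
  have ratio: "\<bar>sqrt (u\<^sup>2 + v\<^sup>2) / v\<bar> = sqrt s"
    using assms s by (simp add: r abs_mult)
  have "sqrt (u\<^sup>2 + v\<^sup>2) powr P * sqrt s powr B = \<bar>v\<bar> powr P * (sqrt s powr P * sqrt s powr B)"
    using s by (simp add: r powr_mult)
  also have "\<dots> = \<bar>v\<bar> powr P * s powr ((P + B) / 2)"
    using s by (simp add: sqrt_powr powr_add [symmetric] add_divide_distrib)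
  finally have radial:
    "sqrt (u\<^sup>2 + v\<^sup>2) powr P * sqrt s powr B = \<bar>v\<bar> powr P * s powr ((P + B) / 2)" .
  have "phi1 C P Q A B u v z
      = z powr Q * (sqrt (u\<^sup>2 + v\<^sup>2) powr P * sqrt s powr B)
          * (1 / (C powr (-2) + 1) powr (B / 2) + B / (2 * C) * I)"
    unfolding phi1_def Let_def ratio I_def by (simp add: algebra_simps)
  also have "\<dots> = z powr Q * \<bar>v\<bar> powr P * phi1_profile C P A B (u / \<bar>v\<bar>)"
    unfolding radial by (simp add: phi1_profile_def s_def I_def mult.assoc)
  finally show ?thesis .
qed

lemma sq_plus_one_pos: "(0::real) < t\<^sup>2 + 1"
  by (simp add: add_nonneg_pos)

lemma continuous_on_powr_sq_plus_one: "continuous_on S (\<lambda>t::real. (t\<^sup>2 + 1) powr e)"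
  by (intro continuous_intros) (metis sq_plus_one_pos order_less_irrefl)

lemma has_real_derivative_powr_sq_plus_one:
  "((\<lambda>t. (t\<^sup>2 + 1) powr e) has_real_derivative 2 * e * t * (t\<^sup>2 + 1) powr (e - 1)) (at t)"
  using sq_plus_one_pos [of t] by (auto intro!: derivative_eq_intros)

lemma phi0_profile_has_real_derivative:
  "(phi0_profile P has_real_derivative P * t * (t\<^sup>2 + 1) powr (P / 2 - 1)) (at t)"
  using has_real_derivative_powr_sq_plus_one [of "P / 2" t]
  by (simp add: phi0_profile_def [abs_def])

lemma phi1_profile_has_real_derivative:
  fixes C P A B t :: real
  defines "f \<equiv> \<lambda>\<tau>. (\<tau>\<^sup>2 + 1) powr ((A - B - 1) / 2)"
  shows "(phi1_profile C P A B has_real_derivative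
      (P + B) * t * (t\<^sup>2 + 1) powr ((P + B) / 2 - 1)
        * (1 / (C powr (-2) + 1) powr (B / 2) + B / (2 * C) * oint t (1 / C) f)
      - B / (2 * C) * (t\<^sup>2 + 1) powr ((P + B) / 2) * f t) (at t)"
proof -
  have "(phi1_profile C P A B has_real_derivative
      2 * ((P + B) / 2) * t * (t\<^sup>2 + 1) powr ((P + B) / 2 - 1)
        * (1 / (C powr (-2) + 1) powr (B / 2) + B / (2 * C) * oint t (1 / C) f)
      + (0 + B / (2 * C) * - f t) * (t\<^sup>2 + 1) powr ((P + B) / 2)) (at t)"
    unfolding phi1_profile_def [abs_def] f_def
    by (intro DERIV_mult DERIV_add DERIV_cmult DERIV_const has_real_derivative_powr_sq_plus_one
        has_real_derivative_oint_lower continuous_on_powr_sq_plus_one)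
  then show ?thesis by (rule DERIV_cong) (simp add: algebra_simps)
qed

lemma deriv_rescale:
  fixes f :: "real \<Rightarrow> real"
  assumes "f differentiable (at (u / a))" and "a \<noteq> 0"
  shows "deriv (\<lambda>x. k * f (x / a)) u = k * deriv f (u / a) / a"
proof -
  have "(f has_real_derivative deriv f (u / a)) (at (u / a))"
    using assms by (simp add: DERIV_deriv_iff_real_differentiable)
  then have "((\<lambda>x. k * f (x / a)) has_real_derivative k * (deriv f (u / a) * (1 / a))) (at u)"
    using assms(2) by (intro DERIV_cmult DERIV_chain2 [where f = f]) (auto intro!: derivative_eq_intros)
  then show ?thesis by (simp add: DERIV_imp_deriv)
qed

lemma deriv_phi0_profile_minus_deriv_phi1_profile_nonpos:
  assumes C: "1 \<le> C" and B: "0 \<le> B" and A: "A \<le> 1"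
  shows "deriv (phi0_profile P) (1 / C) - deriv (phi1_profile C P A B) (1 / C) \<le> 0"
proof -
  define w where "w = (1 / C)\<^sup>2 + 1"
  have w: "1 \<le> w" "w \<le> 2"
    using C by (auto simp: w_def power_le_one)
  have Cw: "C powr (-2) + 1 = w"
    using C by (simp add: w_def powr_minus powr_numeral power_one_over inverse_eq_divide)
  have d0: "deriv (phi0_profile P) (1 / C) = P / C * w powr (P / 2 - 1)"
    using phi0_profile_has_real_derivative [of P "1 / C", folded w_def]
    by (intro DERIV_imp_deriv) simp
  have d1: "deriv (phi1_profile C P A B) (1 / C)
      = (P + B) / C * (w powr ((P + B) / 2 - 1) / w powr (B / 2))
        - B / (2 * C) * (w powr ((P + B) / 2) * w powr ((A - B - 1) / 2))"
    using phi1_profile_has_real_derivative [of C P A B "1 / C", folded w_def, unfolded Cw]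
    by (intro DERIV_imp_deriv) (simp add: oint_def mult.assoc)
  have "w powr ((P + B) / 2 - 1) / w powr (B / 2) = w powr (P / 2 - 1)"
    using w by (simp add: powr_diff [symmetric] diff_divide_distrib add_divide_distrib)
  moreover have
    "w powr ((P + B) / 2) * w powr ((A - B - 1) / 2) = w powr (P / 2 - 1) * w powr ((A + 1) / 2)"
    unfolding powr_add [symmetric] by (simp add: field_simps)
  ultimately have gap: "deriv (phi0_profile P) (1 / C) - deriv (phi1_profile C P A B) (1 / C)
      = B / C * w powr (P / 2 - 1) * (w powr ((A + 1) / 2) / 2 - 1)"
    unfolding d0 d1 by (simp add: algebra_simps add_divide_distrib)
  have "w powr ((A + 1) / 2) \<le> w powr 1"
    using w A by (intro powr_mono) auto
  then have "w powr ((A + 1) / 2) / 2 - 1 \<le> 0"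
    using w by simp
  moreover have "0 \<le> B / C * w powr (P / 2 - 1)"
    using B C by simp
  ultimately show ?thesis
    unfolding gap by (rule mult_nonneg_nonpos [rotated])
qed

lemma deriv_phi0_minus_deriv_phi1_nonpos:
  assumes C: "1 \<le> C" and B: "0 \<le> B" and A: "A \<le> 1"
    and u: "C * u = \<bar>v\<bar>" and v: "v \<noteq> 0"
  shows "deriv (\<lambda>u'. phi0 P Q u' v z) u - deriv (\<lambda>u'. phi1 C P Q A B u' v z) u \<le> 0"
proof -
  define k where "k = z powr Q * \<bar>v\<bar> powr P"
  have t: "u / \<bar>v\<bar> = 1 / C"
    using C u v by (simp add: field_simps)
  have "(\<lambda>u'. phi0 P Q u' v z) = (\<lambda>u'. k * phi0_profile P (u' / \<bar>v\<bar>))"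
    by (simp add: phi0_eq_profile [OF v] k_def)
  moreover have "phi0_profile P differentiable (at (u / \<bar>v\<bar>))"
    unfolding real_differentiable_def by (blast intro: phi0_profile_has_real_derivative)
  ultimately have d0:
    "deriv (\<lambda>u'. phi0 P Q u' v z) u = k * deriv (phi0_profile P) (1 / C) / \<bar>v\<bar>"
    using v by (simp add: deriv_rescale t)
  have "(\<lambda>u'. phi1 C P Q A B u' v z) = (\<lambda>u'. k * phi1_profile C P A B (u' / \<bar>v\<bar>))"
    by (simp add: phi1_eq_profile [OF v] k_def)
  moreover have "phi1_profile C P A B differentiable (at (u / \<bar>v\<bar>))"
    unfolding real_differentiable_def by (blast intro: phi1_profile_has_real_derivative)
  ultimately have d1: "deriv (\<lambda>u'. phi1 C P Q A B u' v z) u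
      = k * deriv (phi1_profile C P A B) (1 / C) / \<bar>v\<bar>"
    using v by (simp add: deriv_rescale t)
  have "0 \<le> k / \<bar>v\<bar>"
    by (simp add: k_def)
  then have
    "k / \<bar>v\<bar> * (deriv (phi0_profile P) (1 / C) - deriv (phi1_profile C P A B) (1 / C)) \<le> 0"
    using deriv_phi0_profile_minus_deriv_phi1_profile_nonpos [OF C B A] by (rule mult_nonneg_nonpos)
  then show ?thesis
    by (simp add: d0 d1 algebra_simps)
qed

theorem lemma7p1:
  fixes h :: real and p q \<alpha> \<beta> :: "nat \<Rightarrow> real"
  assumes h: "0 < h" "h < 1"
    and p_pos: "p 1 > 0" "p 2 > 0"
    and q: "q 1 = 0" "q 2 > 0"
    and \<beta>_def: "\<And>i. i \<in> {1, 2} \<Longrightarrow> \<beta> i = (1/3 + 2/3 * h) * p i - (1 - h) * q i"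
    and \<beta>_bounds: "\<And>i. i \<in> {1, 2} \<Longrightarrow> 0 < \<beta> i \<and> \<beta> i < \<alpha> i \<and> \<alpha> i < 1"
    and q2: "q 2 > 1/3 * p 2 + 1/2 * \<alpha> 2"
    and p21: "p 2 > p 1"
    and p\<alpha>: "p 2 + 3/2 * \<alpha> 2 > p 1 + 3/2 * \<alpha> 1"
  shows "\<exists>C0>0. \<forall>C\<ge>C0. \<forall>u v z. \<forall>i\<in>{1::nat, 2}.
           C * u = \<bar>v\<bar> \<and> v \<noteq> 0 \<and> 0 < z \<and> z \<le> 1 \<longrightarrow>
           deriv (\<lambda>u'. phi0 (p i) (q i) u' v z) u
             - deriv (\<lambda>u'. phi1 C (p i) (q i) (\<alpha> i) (\<beta> i) u' v z) u \<le> 0"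
proof (intro exI [of _ 1] conjI allI impI ballI)
  fix C u v z :: real and i :: nat
  assume C: "1 \<le> C" and i: "i \<in> {1, 2}"
    and uvz: "C * u = \<bar>v\<bar> \<and> v \<noteq> 0 \<and> 0 < z \<and> z \<le> 1"
  from \<beta>_bounds [OF i] have "0 \<le> \<beta> i" "\<alpha> i \<le> 1"
    by auto
  with C uvz show "deriv (\<lambda>u'. phi0 (p i) (q i) u' v z) u
      - deriv (\<lambda>u'. phi1 C (p i) (q i) (\<alpha> i) (\<beta> i) u' v z) u \<le> 0"
    by (intro deriv_phi0_minus_deriv_phi1_nonpos) auto
qed simp

end
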